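(* Let $G$ be a commutative group, $f$ a bijection of $G$, and $Q=G(f)=(G\cup\overline{G},* )$. Then: (i) $Q$ is commutative. (ii) For all $x,y\in G$: $x\backslash y=x^{-1}y$, $x\backslash\overline{y}=\overline{x^{-1}y}$, $\overline{x}\backslash y=\overline{x^{-1}f^{-1}(y)}$, $\overline{x}\backslash\overline{y}=x^{-1}y$. (iii) $G\le N_\mu(Q)$. (iv) $Q$ is a group if and only if $f$ is a translation of $G$, i.e., there is $c\in G$ with $f(x)=xc$ for all $x\in G$. (v) $N_\lambda(Q)\cap G=N_\rho(Q)\cap G=Z(Q)\cap G=\{x\in G:\ f(xy)=xf(y)\text{ for every }y\in G\}$. If $Q$ is not a group (so that $G=N_\mu(Q)$), then $N_\lambda(Q)=N_\rho(Q)=Z(Q)\le G$.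
   Context: A loop is a set with a binary operation and a neutral element $1$ in which all left translations $L_x:y\mapsto xy$ and right translations $R_x:y\mapsto yx$ are bijections; $x\backslash y$ denotes the unique $z$ with $xz=y$. For a loop $Q$: the left nucleus is $N_\lambda(Q)=\{x:(xy)z=x(yz)\ \forall y,z\}$, the middle nucleus is $N_\mu(Q)=\{y:(xy)z=x(yz)\ \forall x,z\}$, the right nucleus is $N_\rho(Q)=\{z:(xy)z=x(yz)\ \forall x,y\}$, and the center $Z(Q)$ is the set of elements lying in all three nuclei and commuting with all elements. Construction $G(f)$: for a commutative group $G$ (written multiplicatively) and a bijection $f:G\to G$, let $\overline{G}=\{\overline{x}:x\in G\}$ be a disjoint copy of $G$, and let $G(f)$ be the set $G\cup\overline{G}$ with multiplication $*$ defined for $x,y\in G$ by $x*y=xy$, $x*\overline{y}=\overline{xy}$, $\overline{x}*y=\overline{xy}$, $\overline{x}*\overline{y}=f(xy)$. It is a loop with neutral element $1$. *)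

theory Defs
  imports "HOL-Algebra.Group"
begin

text \<open>The construction G(f): elements Inl x stand for x \<in> G, elements Inr x for the
  copy \<open>overline x\<close>.\<close>

fun Gf_mult :: "('a, 'b) monoid_scheme \<Rightarrow> ('a \<Rightarrow> 'a) \<Rightarrow> 'a + 'a \<Rightarrow> 'a + 'a \<Rightarrow> 'a + 'a" where
  "Gf_mult G f (Inl x) (Inl y) = Inl (x \<otimes>\<^bsub>G\<^esub> y)"
| "Gf_mult G f (Inl x) (Inr y) = Inr (x \<otimes>\<^bsub>G\<^esub> y)"
| "Gf_mult G f (Inr x) (Inl y) = Inr (x \<otimes>\<^bsub>G\<^esub> y)"
| "Gf_mult G f (Inr x) (Inr y) = Inl (f (x \<otimes>\<^bsub>G\<^esub> y))"

definition Gf :: "('a, 'b) monoid_scheme \<Rightarrow> ('a \<Rightarrow> 'a) \<Rightarrow> ('a + 'a) monoid" where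
  "Gf G f = \<lparr> carrier = carrier G <+> carrier G,
              mult = Gf_mult G f,
              one = Inl \<one>\<^bsub>G\<^esub> \<rparr>"

definition loop_ldiv :: "('c, 'd) monoid_scheme \<Rightarrow> 'c \<Rightarrow> 'c \<Rightarrow> 'c" where
  "loop_ldiv Q x y = (THE z. z \<in> carrier Q \<and> x \<otimes>\<^bsub>Q\<^esub> z = y)"

definition left_nucleus :: "('c, 'd) monoid_scheme \<Rightarrow> 'c set" where
  "left_nucleus Q = {x \<in> carrier Q. \<forall>y\<in>carrier Q. \<forall>z\<in>carrier Q.
      (x \<otimes>\<^bsub>Q\<^esub> y) \<otimes>\<^bsub>Q\<^esub> z = x \<otimes>\<^bsub>Q\<^esub> (y \<otimes>\<^bsub>Q\<^esub> z)}"

definition middle_nucleus :: "('c, 'd) monoid_scheme \<Rightarrow> 'c set" where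
  "middle_nucleus Q = {y \<in> carrier Q. \<forall>x\<in>carrier Q. \<forall>z\<in>carrier Q.
      (x \<otimes>\<^bsub>Q\<^esub> y) \<otimes>\<^bsub>Q\<^esub> z = x \<otimes>\<^bsub>Q\<^esub> (y \<otimes>\<^bsub>Q\<^esub> z)}"

definition right_nucleus :: "('c, 'd) monoid_scheme \<Rightarrow> 'c set" where
  "right_nucleus Q = {z \<in> carrier Q. \<forall>x\<in>carrier Q. \<forall>y\<in>carrier Q.
      (x \<otimes>\<^bsub>Q\<^esub> y) \<otimes>\<^bsub>Q\<^esub> z = x \<otimes>\<^bsub>Q\<^esub> (y \<otimes>\<^bsub>Q\<^esub> z)}"

definition loop_center :: "('c, 'd) monoid_scheme \<Rightarrow> 'c set" where
  "loop_center Q = {x \<in> left_nucleus Q \<inter> middle_nucleus Q \<inter> right_nucleus Q.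
      \<forall>y\<in>carrier Q. x \<otimes>\<^bsub>Q\<^esub> y = y \<otimes>\<^bsub>Q\<^esub> x}"

end

theory Submission
  imports Defs
begin

text \<open>G(f) is commutative, so its left and right nuclei coincide and its centre is the
  intersection of the left and middle nuclei. Every \<open>x \<in> G\<close> lies in the middle nucleus, and
  associativity of the triple \<open>(x, overline 1, overline y)\<close> reads \<open>f (x y) = x f y\<close>.
  If some \<open>overline u\<close> lies in the left or middle nucleus, a suitable triple gives
  \<open>f (x u) = x f u\<close> for all x, which makes f the translation by \<open>u\<inverse> f u\<close>; so a group
  G(f) forces f to be a translation, and conversely a translation \<open>f x = x c\<close> makes all
  products associate.\<close>

lemma carrier_Gf [simp]: "carrier (Gf G f) = carrier G <+> carrier G"
  by (simp add: Gf_def)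

lemma mult_Gf [simp]: "a \<otimes>\<^bsub>Gf G f\<^esub> b = Gf_mult G f a b"
  by (simp add: Gf_def)

lemma one_Gf [simp]: "\<one>\<^bsub>Gf G f\<^esub> = Inl \<one>\<^bsub>G\<^esub>"
  by (simp add: Gf_def)

lemma Inl_in_Plus_iff [simp]: "Inl x \<in> A <+> B \<longleftrightarrow> x \<in> A"
  by auto

lemma Inr_in_Plus_iff [simp]: "Inr y \<in> A <+> B \<longleftrightarrow> y \<in> B"
  by auto

lemma loop_ldiv_eqI:
  assumes "inj_on (\<lambda>z. x \<otimes>\<^bsub>Q\<^esub> z) (carrier Q)" and "z \<in> carrier Q" and "x \<otimes>\<^bsub>Q\<^esub> z = y"
  shows "loop_ldiv Q x y = z"
  unfolding loop_ldiv_def using assms by (auto dest: inj_onD)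

lemma left_nucleusD:
  "x \<in> left_nucleus Q \<Longrightarrow> y \<in> carrier Q \<Longrightarrow> z \<in> carrier Q \<Longrightarrow>
    (x \<otimes>\<^bsub>Q\<^esub> y) \<otimes>\<^bsub>Q\<^esub> z = x \<otimes>\<^bsub>Q\<^esub> (y \<otimes>\<^bsub>Q\<^esub> z)"
  by (simp add: left_nucleus_def)

lemma middle_nucleusD:
  "y \<in> middle_nucleus Q \<Longrightarrow> x \<in> carrier Q \<Longrightarrow> z \<in> carrier Q \<Longrightarrow>
    (x \<otimes>\<^bsub>Q\<^esub> y) \<otimes>\<^bsub>Q\<^esub> z = x \<otimes>\<^bsub>Q\<^esub> (y \<otimes>\<^bsub>Q\<^esub> z)"
  by (simp add: middle_nucleus_def)

lemma left_nucleus_eq_right_nucleus_if_comm: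
  assumes closed: "\<And>a b. a \<in> carrier Q \<Longrightarrow> b \<in> carrier Q \<Longrightarrow> a \<otimes>\<^bsub>Q\<^esub> b \<in> carrier Q"
    and comm: "\<And>a b. a \<in> carrier Q \<Longrightarrow> b \<in> carrier Q \<Longrightarrow> a \<otimes>\<^bsub>Q\<^esub> b = b \<otimes>\<^bsub>Q\<^esub> a"
  shows "left_nucleus Q = right_nucleus Q"
proof -
  have "(x \<otimes>\<^bsub>Q\<^esub> y) \<otimes>\<^bsub>Q\<^esub> z = x \<otimes>\<^bsub>Q\<^esub> (y \<otimes>\<^bsub>Q\<^esub> z) \<longleftrightarrow>
        (z \<otimes>\<^bsub>Q\<^esub> y) \<otimes>\<^bsub>Q\<^esub> x = z \<otimes>\<^bsub>Q\<^esub> (y \<otimes>\<^bsub>Q\<^esub> x)"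
    if "x \<in> carrier Q" "y \<in> carrier Q" "z \<in> carrier Q" for x y z
    using that closed comm by metis
  then show ?thesis
    unfolding left_nucleus_def right_nucleus_def by blast
qed

lemma loop_center_eq_nuclei_if_comm:
  assumes "\<And>a b. a \<in> carrier Q \<Longrightarrow> b \<in> carrier Q \<Longrightarrow> a \<otimes>\<^bsub>Q\<^esub> b = b \<otimes>\<^bsub>Q\<^esub> a"
  shows "loop_center Q = left_nucleus Q \<inter> middle_nucleus Q \<inter> right_nucleus Q"
  using assms by (auto simp: loop_center_def left_nucleus_def)

lemma (in group) middle_nucleus_eq_carrier: "middle_nucleus G = carrier G"
  by (auto simp: middle_nucleus_def m_assoc)

context comm_group
begin

definition is_translation :: "('a \<Rightarrow> 'a) \<Rightarrow> bool" where
  "is_translation f \<longleftrightarrow> (\<exists>c\<in>carrier G. \<forall>x\<in>carrier G. f x = x \<otimes> c)"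

lemma is_translationI:
  assumes u: "u \<in> carrier G" and fu: "f u \<in> carrier G"
    and shift: "\<And>x. x \<in> carrier G \<Longrightarrow> f (x \<otimes> u) = x \<otimes> f u"
  shows "is_translation f"
  unfolding is_translation_def
proof (intro bexI ballI)
  fix x assume x: "x \<in> carrier G"
  have "f x = f ((x \<otimes> inv u) \<otimes> u)"
    using x u by (simp add: m_assoc)
  also have "\<dots> = (x \<otimes> inv u) \<otimes> f u"
    using x u by (simp add: shift)
  finally show "f x = x \<otimes> (inv u \<otimes> f u)"
    using x u fu by (simp add: m_assoc)
qed (use u fu in simp)

lemma Gf_mult_closed:
  assumes "f \<in> carrier G \<rightarrow> carrier G" "a \<in> carrier G <+> carrier G" "b \<in> carrier G <+> carrier G"
  shows "Gf_mult G f a b \<in> carrier G <+> carrier G"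
  using assms by (auto elim!: PlusE)

lemma Gf_mult_comm:
  assumes "a \<in> carrier G <+> carrier G" "b \<in> carrier G <+> carrier G"
  shows "Gf_mult G f a b = Gf_mult G f b a"
  using assms by (auto elim!: PlusE simp: m_comm)

lemma inj_on_Gf_mult:
  assumes "inj_on f (carrier G)" and "a \<in> carrier G <+> carrier G"
  shows "inj_on (Gf_mult G f a) (carrier G <+> carrier G)"
  using assms by (auto intro!: inj_onI elim!: PlusE simp: inj_on_eq_iff)

lemma right_nucleus_Gf_eq_left_nucleus:
  assumes "f \<in> carrier G \<rightarrow> carrier G"
  shows "right_nucleus (Gf G f) = left_nucleus (Gf G f)"
  using assms Gf_mult_closed Gf_mult_comm
  by (intro left_nucleus_eq_right_nucleus_if_comm[symmetric]) simp_all

lemma loop_center_Gf: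
  assumes "f \<in> carrier G \<rightarrow> carrier G"
  shows "loop_center (Gf G f) = left_nucleus (Gf G f) \<inter> middle_nucleus (Gf G f)"
proof -
  have "loop_center (Gf G f) = left_nucleus (Gf G f) \<inter> middle_nucleus (Gf G f) \<inter> right_nucleus (Gf G f)"
    using Gf_mult_comm by (intro loop_center_eq_nuclei_if_comm) simp
  then show ?thesis
    using right_nucleus_Gf_eq_left_nucleus[OF assms] by blast
qed

lemma Gf_ldiv:
  assumes f: "bij_betw f (carrier G) (carrier G)" and x: "x \<in> carrier G" and y: "y \<in> carrier G"
  shows "loop_ldiv (Gf G f) (Inl x) (Inl y) = Inl (inv x \<otimes> y)"
    and "loop_ldiv (Gf G f) (Inl x) (Inr y) = Inr (inv x \<otimes> y)"
    and "loop_ldiv (Gf G f) (Inr x) (Inl y) = Inr (inv x \<otimes> inv_into (carrier G) f y)"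
    and "loop_ldiv (Gf G f) (Inr x) (Inr y) = Inl (inv x \<otimes> y)"
proof -
  have inj: "inj_on (\<lambda>z. a \<otimes>\<^bsub>Gf G f\<^esub> z) (carrier (Gf G f))" if "a \<in> carrier (Gf G f)" for a
    using that inj_on_Gf_mult bij_betw_imp_inj_on[OF f] by simp
  have x_div: "x \<otimes> (inv x \<otimes> w) = w" if "w \<in> carrier G" for w
    using x that by (simp add: m_assoc[symmetric])
  have f_inv_y: "inv_into (carrier G) f y \<in> carrier G" "f (inv_into (carrier G) f y) = y"
    using y f by (auto simp: bij_betw_def inv_into_into f_inv_into_f)
  show "loop_ldiv (Gf G f) (Inl x) (Inl y) = Inl (inv x \<otimes> y)"
    "loop_ldiv (Gf G f) (Inl x) (Inr y) = Inr (inv x \<otimes> y)"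
    "loop_ldiv (Gf G f) (Inr x) (Inl y) = Inr (inv x \<otimes> inv_into (carrier G) f y)"
    "loop_ldiv (Gf G f) (Inr x) (Inr y) = Inl (inv x \<otimes> y)"
    using x y f_inv_y by (auto intro!: loop_ldiv_eqI inj simp: x_div)
qed

lemma Inl_in_middle_nucleus: "x \<in> carrier G \<Longrightarrow> Inl x \<in> middle_nucleus (Gf G f)"
  by (auto simp: middle_nucleus_def m_assoc elim!: PlusE)

lemma Inl_in_left_nucleus_iff:
  assumes x: "x \<in> carrier G"
  shows "Inl x \<in> left_nucleus (Gf G f) \<longleftrightarrow> (\<forall>y\<in>carrier G. f (x \<otimes> y) = x \<otimes> f y)"
proof
  assume "Inl x \<in> left_nucleus (Gf G f)"
  from left_nucleusD[OF this, of "Inr \<one>" "Inr y" for y]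
  show "\<forall>y\<in>carrier G. f (x \<otimes> y) = x \<otimes> f y"
    using x by auto
qed (use x in \<open>auto simp: left_nucleus_def m_assoc elim!: PlusE\<close>)

lemma Inr_in_middle_nucleus_imp_translation:
  assumes f: "f \<in> carrier G \<rightarrow> carrier G" and u: "Inr u \<in> middle_nucleus (Gf G f)"
  shows "is_translation f"
proof -
  have uG: "u \<in> carrier G"
    using u by (auto simp: middle_nucleus_def)
  from middle_nucleusD[OF u, of "Inr x" "Inr \<one>" for x] show ?thesis
    using uG f by (intro is_translationI[of u]) (auto simp: Pi_iff)
qed

lemma Inr_in_left_nucleus_imp_translation:
  assumes f: "f \<in> carrier G \<rightarrow> carrier G" and u: "Inr u \<in> left_nucleus (Gf G f)"
  shows "is_translation f"
proof -
  have uG: "u \<in> carrier G"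
    using u by (auto simp: left_nucleus_def)
  from left_nucleusD[OF u, of "Inr \<one>" "Inl x" for x] show ?thesis
    using uG f by (intro is_translationI[of u]) (auto simp: Pi_iff m_comm)
qed

lemma translation_imp_group_Gf:
  assumes "is_translation f"
  shows "group (Gf G f)"
proof -
  obtain c where c: "c \<in> carrier G" and fc: "\<And>x. x \<in> carrier G \<Longrightarrow> f x = x \<otimes> c"
    using assms unfolding is_translation_def by blast
  have inv_Inr: "Gf_mult G f (Inr (inv (x \<otimes> c))) (Inr x) = Inl \<one>" if "x \<in> carrier G" for x
    using that c by (simp add: fc m_assoc)
  show ?thesis
  proof (rule groupI)
    fix a assume "a \<in> carrier (Gf G f)"
    then consider x where "x \<in> carrier G" "a = Inl x" | x where "x \<in> carrier G" "a = Inr x"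
      by auto
    then show "\<exists>b\<in>carrier (Gf G f). b \<otimes>\<^bsub>Gf G f\<^esub> a = \<one>\<^bsub>Gf G f\<^esub>"
    proof cases
      case 1
      then show ?thesis by (intro bexI[of _ "Inl (inv x)"]) auto
    next
      case 2
      then show ?thesis using c inv_Inr by (intro bexI[of _ "Inr (inv (x \<otimes> c))"]) auto
    qed
  qed (use c in \<open>auto elim!: PlusE simp: fc m_assoc m_lcomm intro: m_comm\<close>)
qed

lemma group_Gf_iff_translation:
  assumes f: "f \<in> carrier G \<rightarrow> carrier G"
  shows "group (Gf G f) \<longleftrightarrow> is_translation f"
proof
  assume "group (Gf G f)"
  then have "Inr \<one> \<in> middle_nucleus (Gf G f)"
    by (auto simp: group.middle_nucleus_eq_carrier)
  then show "is_translation f"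
    by (rule Inr_in_middle_nucleus_imp_translation[OF f])
qed (rule translation_imp_group_Gf)

lemma nuclei_Gf_inter_Inl:
  assumes f: "f \<in> carrier G \<rightarrow> carrier G"
  shows "left_nucleus (Gf G f) \<inter> Inl ` carrier G = right_nucleus (Gf G f) \<inter> Inl ` carrier G"
    and "right_nucleus (Gf G f) \<inter> Inl ` carrier G = loop_center (Gf G f) \<inter> Inl ` carrier G"
    and "loop_center (Gf G f) \<inter> Inl ` carrier G =
      Inl ` {x \<in> carrier G. \<forall>y\<in>carrier G. f (x \<otimes> y) = x \<otimes> f y}"
proof -
  have "loop_center (Gf G f) \<inter> Inl ` carrier G = left_nucleus (Gf G f) \<inter> Inl ` carrier G"
    using Inl_in_middle_nucleus unfolding loop_center_Gf[OF f] by blast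
  moreover have "left_nucleus (Gf G f) \<inter> Inl ` carrier G =
      Inl ` {x \<in> carrier G. \<forall>y\<in>carrier G. f (x \<otimes> y) = x \<otimes> f y}"
    using Inl_in_left_nucleus_iff by blast
  ultimately show "left_nucleus (Gf G f) \<inter> Inl ` carrier G = right_nucleus (Gf G f) \<inter> Inl ` carrier G"
    and "right_nucleus (Gf G f) \<inter> Inl ` carrier G = loop_center (Gf G f) \<inter> Inl ` carrier G"
    and "loop_center (Gf G f) \<inter> Inl ` carrier G =
      Inl ` {x \<in> carrier G. \<forall>y\<in>carrier G. f (x \<otimes> y) = x \<otimes> f y}"
    unfolding right_nucleus_Gf_eq_left_nucleus[OF f] by simp_all
qed

lemma nuclei_Gf_if_not_group:
  assumes f: "f \<in> carrier G \<rightarrow> carrier G" and "\<not> group (Gf G f)"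
  shows "middle_nucleus (Gf G f) = Inl ` carrier G"
    and "left_nucleus (Gf G f) = right_nucleus (Gf G f)"
    and "right_nucleus (Gf G f) = loop_center (Gf G f)"
    and "loop_center (Gf G f) \<subseteq> Inl ` carrier G"
proof -
  have "\<not> is_translation f"
    using assms group_Gf_iff_translation by blast
  then have "Inr u \<notin> left_nucleus (Gf G f)" "Inr u \<notin> middle_nucleus (Gf G f)" for u
    using f Inr_in_left_nucleus_imp_translation Inr_in_middle_nucleus_imp_translation by blast+
  moreover have "left_nucleus (Gf G f) \<union> middle_nucleus (Gf G f) \<subseteq> carrier G <+> carrier G"
    by (auto simp: left_nucleus_def middle_nucleus_def)
  ultimately have "left_nucleus (Gf G f) \<subseteq> Inl ` carrier G" "middle_nucleus (Gf G f) \<subseteq> Inl ` carrier G"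
    by (auto elim!: PlusE)
  then show "middle_nucleus (Gf G f) = Inl ` carrier G"
    and "left_nucleus (Gf G f) = right_nucleus (Gf G f)"
    and "right_nucleus (Gf G f) = loop_center (Gf G f)"
    and "loop_center (Gf G f) \<subseteq> Inl ` carrier G"
    using Inl_in_middle_nucleus
    unfolding right_nucleus_Gf_eq_left_nucleus[OF f] loop_center_Gf[OF f] by auto
qed

end

theorem lemma2p1:
  fixes G :: "('a, 'b) monoid_scheme" and f :: "'a \<Rightarrow> 'a"
  assumes "comm_group G"
    and "bij_betw f (carrier G) (carrier G)"
  defines "Q \<equiv> Gf G f"
  shows
    "(\<forall>a\<in>carrier Q. \<forall>b\<in>carrier Q. a \<otimes>\<^bsub>Q\<^esub> b = b \<otimes>\<^bsub>Q\<^esub> a) \<and>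
    (\<forall>x\<in>carrier G. \<forall>y\<in>carrier G.
        loop_ldiv Q (Inl x) (Inl y) = Inl (inv\<^bsub>G\<^esub> x \<otimes>\<^bsub>G\<^esub> y) \<and>
        loop_ldiv Q (Inl x) (Inr y) = Inr (inv\<^bsub>G\<^esub> x \<otimes>\<^bsub>G\<^esub> y) \<and>
        loop_ldiv Q (Inr x) (Inl y) = Inr (inv\<^bsub>G\<^esub> x \<otimes>\<^bsub>G\<^esub> inv_into (carrier G) f y) \<and>
        loop_ldiv Q (Inr x) (Inr y) = Inl (inv\<^bsub>G\<^esub> x \<otimes>\<^bsub>G\<^esub> y)) \<and>
    Inl ` carrier G \<subseteq> middle_nucleus Q \<and>
    (group Q \<longleftrightarrow> (\<exists>c\<in>carrier G. \<forall>x\<in>carrier G. f x = x \<otimes>\<^bsub>G\<^esub> c)) \<and>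
    (left_nucleus Q \<inter> Inl ` carrier G = right_nucleus Q \<inter> Inl ` carrier G \<and>
     right_nucleus Q \<inter> Inl ` carrier G = loop_center Q \<inter> Inl ` carrier G \<and>
     loop_center Q \<inter> Inl ` carrier G =
       Inl ` {x \<in> carrier G. \<forall>y\<in>carrier G. f (x \<otimes>\<^bsub>G\<^esub> y) = x \<otimes>\<^bsub>G\<^esub> f y}) \<and>
    (\<not> group Q \<longrightarrow> middle_nucleus Q = Inl ` carrier G \<and>
       left_nucleus Q = right_nucleus Q \<and> right_nucleus Q = loop_center Q \<and>
       loop_center Q \<subseteq> Inl ` carrier G)"
proof -
  interpret comm_group G by (rule assms(1))
  have f: "f \<in> carrier G \<rightarrow> carrier G"
    using assms(2) by (rule bij_betw_imp_funcset)
  have comm: "\<forall>a\<in>carrier Q. \<forall>b\<in>carrier Q. a \<otimes>\<^bsub>Q\<^esub> b = b \<otimes>\<^bsub>Q\<^esub> a"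
    unfolding Q_def using Gf_mult_comm by simp
  have ldiv: "\<forall>x\<in>carrier G. \<forall>y\<in>carrier G.
        loop_ldiv Q (Inl x) (Inl y) = Inl (inv\<^bsub>G\<^esub> x \<otimes>\<^bsub>G\<^esub> y) \<and>
        loop_ldiv Q (Inl x) (Inr y) = Inr (inv\<^bsub>G\<^esub> x \<otimes>\<^bsub>G\<^esub> y) \<and>
        loop_ldiv Q (Inr x) (Inl y) = Inr (inv\<^bsub>G\<^esub> x \<otimes>\<^bsub>G\<^esub> inv_into (carrier G) f y) \<and>
        loop_ldiv Q (Inr x) (Inr y) = Inl (inv\<^bsub>G\<^esub> x \<otimes>\<^bsub>G\<^esub> y)"
    unfolding Q_def by (simp add: Gf_ldiv[OF assms(2)])
  have mid: "Inl ` carrier G \<subseteq> middle_nucleus Q"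
    unfolding Q_def using Inl_in_middle_nucleus by blast
  have group_iff: "group Q \<longleftrightarrow> (\<exists>c\<in>carrier G. \<forall>x\<in>carrier G. f x = x \<otimes>\<^bsub>G\<^esub> c)"
    unfolding Q_def group_Gf_iff_translation[OF f] is_translation_def ..
  show ?thesis
    using comm ldiv mid group_iff unfolding Q_def
    by (intro conjI impI nuclei_Gf_inter_Inl[OF f] nuclei_Gf_if_not_group[OF f]) assumption+
qed

end
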